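(* Let $V$ be a finite set of discrete random variables with joint distribution $P$, and let $\mathcal{G}_{\texttt{FD}}$ be the FD-induced graph on $V$ (assumed acyclic). Let $Z\in V$ be a sink node of $\mathcal{G}_{\texttt{FD}}$, i.e. $Z$ has no outgoing edges in $\mathcal{G}_{\texttt{FD}}$, and let $X_i$ be any node with $X_i\xrightarrow{\texttt{FD}} Z$ (an edge $(X_i,Z)$ of $\mathcal{G}_{\texttt{FD}}$). Suppose $\mathcal{S}_1$ is a harmonious skeleton over $V\setminus\{Z\}$ with respect to the marginal distribution of $P$ on $V\setminus\{Z\}$, and let $\mathcal{S}_2$ be the graph on $V$ whose only edge is the undirected edge $X_i - Z$. Then $\mathcal{S}=\mathcal{S}_1\cup\mathcal{S}_2$ (the undirected graph on $V$ whose edge set is the union of the edge sets) is a harmonious skeleton over $V$ with respect to $P$.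
   Context: Standing assumption: every variable takes at least two values with positive probability. Functional dependency: $X\xrightarrow{\texttt{FD}} Y$ means $Y=f(X)$ almost surely for some deterministic function $f$. The FD-induced graph $\mathcal{G}_{\texttt{FD}}$ has vertex set $V$ and a directed edge $(X,Y)$ whenever $X\xrightarrow{\texttt{FD}} Y$. A directed mixed graph has at most one edge between two nodes, each edge either directed ($\to$) or bidirected ($\leftrightarrow$). On a path, a non-endpoint node is a collider if both adjacent edges have arrowheads into it. A path between $X$ and $Y$ is blocked by a set $W$ (not containing $X,Y$) if some non-endpoint node on it is either a non-collider belonging to $W$, or a collider such that neither it nor any of its descendants belongs to $W$. $X$ and $Y$ are m-separated by $W$ ($X\perp_{\mathcal{G}} Y\mid W$) if every path between them is blocked by $W$. A maximal ancestral graph (MAG) is a directed mixed graph with no directed cycle, no almost directed cycle ($X\to\cdots\to Z\leftrightarrow X$), and in which every pair of non-adjacent nodes is m-separated by some set of nodes. $P$ satisfies the global Markov property (GMP) w.r.t. a MAG $\mathcal{G}$ if $X\perp_{\mathcal{G}}Y\mid W$ implies $X\perp Y\mid W$ (conditional independence under $P$). A skeleton is an undirected graph; the skeleton of a MAG is obtained by forgetting edge marks. An undirected graph $\mathcal{S}$ on a variable set is a harmonious skeleton w.r.t. a distribution $P$ on those variables if (1) there is a MAG $\mathcal{G}$ with the same adjacencies as $\mathcal{S}$, (2) $P$ satisfies GMP w.r.t. $\mathcal{G}$, and (3) no proper subgraph of $\mathcal{S}$ (obtained by deleting edges) satisfies (1) and (2). *)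

theory Defs
  imports "HOL-Probability.Probability"
begin

text \<open>A directed mixed graph on vertex set V is given by a set D of directed
edges (a,b) meaning a -> b, and a symmetric set B of bidirected edges.\<close>

definition is_dmg :: "'v set \<Rightarrow> ('v \<times> 'v) set \<Rightarrow> ('v \<times> 'v) set \<Rightarrow> bool" where
  "is_dmg V D B \<longleftrightarrow> D \<subseteq> V \<times> V \<and> B \<subseteq> V \<times> V \<and> sym B \<and>
     (\<forall>a. (a,a) \<notin> D \<and> (a,a) \<notin> B) \<and>
     (\<forall>a b. (a,b) \<in> D \<longrightarrow> (b,a) \<notin> D \<and> (a,b) \<notin> B)"

definition adj :: "('v \<times> 'v) set \<Rightarrow> ('v \<times> 'v) set \<Rightarrow> 'v \<Rightarrow> 'v \<Rightarrow> bool" where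
  "adj D B a b \<longleftrightarrow> (a,b) \<in> D \<or> (b,a) \<in> D \<or> (a,b) \<in> B \<or> (b,a) \<in> B"

definition arrow_into :: "('v \<times> 'v) set \<Rightarrow> ('v \<times> 'v) set \<Rightarrow> 'v \<Rightarrow> 'v \<Rightarrow> bool" where
  "arrow_into D B a b \<longleftrightarrow> (a,b) \<in> D \<or> (a,b) \<in> B"

text \<open>A path from a to b: a list of distinct vertices, consecutive ones adjacent
(since there is at most one edge between two nodes, the vertex list determines the path).\<close>
definition is_path :: "('v \<times> 'v) set \<Rightarrow> ('v \<times> 'v) set \<Rightarrow> 'v \<Rightarrow> 'v \<Rightarrow> 'v list \<Rightarrow> bool" where
  "is_path D B a b p \<longleftrightarrow> p \<noteq> [] \<and> hd p = a \<and> last p = b \<and> distinct p \<and>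
     (\<forall>i. Suc i < length p \<longrightarrow> adj D B (p ! i) (p ! Suc i))"

definition collider :: "('v \<times> 'v) set \<Rightarrow> ('v \<times> 'v) set \<Rightarrow> 'v list \<Rightarrow> nat \<Rightarrow> bool" where
  "collider D B p i \<longleftrightarrow>
     arrow_into D B (p ! (i - 1)) (p ! i) \<and> arrow_into D B (p ! (i + 1)) (p ! i)"

text \<open>Descendants of v (including v itself) are the w with (v,w) in D^*.\<close>
definition blocked :: "('v \<times> 'v) set \<Rightarrow> ('v \<times> 'v) set \<Rightarrow> 'v set \<Rightarrow> 'v list \<Rightarrow> bool" where
  "blocked D B W p \<longleftrightarrow> (\<exists>i. 0 < i \<and> Suc i < length p \<and>
     ((\<not> collider D B p i \<and> p ! i \<in> W) \<or>
      (collider D B p i \<and> (\<forall>d. (p ! i, d) \<in> D\<^sup>* \<longrightarrow> d \<notin> W))))"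

definition msep :: "('v \<times> 'v) set \<Rightarrow> ('v \<times> 'v) set \<Rightarrow> 'v \<Rightarrow> 'v \<Rightarrow> 'v set \<Rightarrow> bool" where
  "msep D B a b W \<longleftrightarrow> a \<notin> W \<and> b \<notin> W \<and> (\<forall>p. is_path D B a b p \<longrightarrow> blocked D B W p)"

definition is_MAG :: "'v set \<Rightarrow> ('v \<times> 'v) set \<Rightarrow> ('v \<times> 'v) set \<Rightarrow> bool" where
  "is_MAG V D B \<longleftrightarrow> is_dmg V D B \<and>
     (\<forall>v. (v,v) \<notin> D\<^sup>+) \<and>
     (\<forall>a b. (a,b) \<in> B \<longrightarrow> (a,b) \<notin> D\<^sup>+) \<and>
     (\<forall>a\<in>V. \<forall>b\<in>V. a \<noteq> b \<and> \<not> adj D B a b \<longrightarrow> (\<exists>W\<subseteq>V. msep D B a b W))"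

definition mag_skeleton :: "('v \<times> 'v) set \<Rightarrow> ('v \<times> 'v) set \<Rightarrow> 'v set set" where
  "mag_skeleton D B = {{a,b} | a b. (a,b) \<in> D \<or> (a,b) \<in> B}"

text \<open>The joint distribution on a subset W of variables is the law of
the family (X v) for v in W; marginalisation = restricting to fewer variables.\<close>

definition vals :: "('v \<Rightarrow> 'w \<Rightarrow> 'a) \<Rightarrow> 'v set \<Rightarrow> 'w \<Rightarrow> ('v \<Rightarrow> 'a)" where
  "vals X W \<omega> = restrict (\<lambda>v. X v \<omega>) W"

definition cond_indep :: "'w pmf \<Rightarrow> ('v \<Rightarrow> 'w \<Rightarrow> 'a) \<Rightarrow> 'v \<Rightarrow> 'v \<Rightarrow> 'v set \<Rightarrow> bool" where
  "cond_indep P X a b W \<longleftrightarrow> (\<forall>x y w.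
     measure_pmf.prob P {\<omega>. X a \<omega> = x \<and> X b \<omega> = y \<and> vals X W \<omega> = w} *
       measure_pmf.prob P {\<omega>. vals X W \<omega> = w} =
     measure_pmf.prob P {\<omega>. X a \<omega> = x \<and> vals X W \<omega> = w} *
       measure_pmf.prob P {\<omega>. X b \<omega> = y \<and> vals X W \<omega> = w})"

definition GMP :: "'w pmf \<Rightarrow> ('v \<Rightarrow> 'w \<Rightarrow> 'a) \<Rightarrow> 'v set \<Rightarrow> ('v \<times> 'v) set \<Rightarrow> ('v \<times> 'v) set \<Rightarrow> bool" where
  "GMP P X V D B \<longleftrightarrow> (\<forall>a\<in>V. \<forall>b\<in>V. \<forall>W\<subseteq>V. msep D B a b W \<longrightarrow> cond_indep P X a b W)"

definition FD :: "'w pmf \<Rightarrow> ('v \<Rightarrow> 'w \<Rightarrow> 'a) \<Rightarrow> 'v \<Rightarrow> 'v \<Rightarrow> bool" where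
  "FD P X a b \<longleftrightarrow> (\<exists>f. AE \<omega> in measure_pmf P. X b \<omega> = f (X a \<omega>))"

definition fd_edges :: "'w pmf \<Rightarrow> ('v \<Rightarrow> 'w \<Rightarrow> 'a) \<Rightarrow> 'v set \<Rightarrow> ('v \<times> 'v) set" where
  "fd_edges P X V = {(a,b). a \<in> V \<and> b \<in> V \<and> a \<noteq> b \<and> FD P X a b}"

definition is_ugraph :: "'v set \<Rightarrow> 'v set set \<Rightarrow> bool" where
  "is_ugraph V E \<longleftrightarrow> (\<forall>e\<in>E. \<exists>a b. a \<noteq> b \<and> a \<in> V \<and> b \<in> V \<and> e = {a,b})"

definition compatible_skel :: "'w pmf \<Rightarrow> ('v \<Rightarrow> 'w \<Rightarrow> 'a) \<Rightarrow> 'v set \<Rightarrow> 'v set set \<Rightarrow> bool" where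
  "compatible_skel P X V E \<longleftrightarrow>
     (\<exists>D B. is_MAG V D B \<and> mag_skeleton D B = E \<and> GMP P X V D B)"

definition harmonious :: "'w pmf \<Rightarrow> ('v \<Rightarrow> 'w \<Rightarrow> 'a) \<Rightarrow> 'v set \<Rightarrow> 'v set set \<Rightarrow> bool" where
  "harmonious P X V E \<longleftrightarrow> is_ugraph V E \<and> compatible_skel P X V E \<and>
     \<not> (\<exists>E'. E' \<subset> E \<and> compatible_skel P X V E')"

end

theory Submission
  imports Defs
begin

text \<open>
  Since \<open>Xi \<rightarrow> Z\<close> is a functional dependency, \<open>Z = f Xi\<close> almost surely. Compatibility: adding
  the single edge \<open>Xi \<rightarrow> Z\<close> to a MAG for \<open>V - {Z}\<close> gives a MAG on \<open>V\<close> in which \<open>Z\<close> is a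
  pendant child of \<open>Xi\<close>. An m-separation in the enlarged graph yields m-separations in the old
  one, with \<open>Z\<close> dropped from the separating set or replaced by \<open>Xi\<close> (there or as an endpoint), and
  the resulting independences transfer back along \<open>Z = f Xi\<close> by weak union and contraction.
  Minimality: a compatible skeleton with fewer edges restricts to a compatible skeleton on
  \<open>V - {Z}\<close>, which by minimality of \<open>S1\<close> is \<open>S1\<close> itself; so it lacks the edge \<open>Xi - Z\<close>, leaving
  \<open>Z\<close> isolated and hence marginally independent of \<open>Xi\<close>, which is impossible for a
  non-constant function of \<open>Xi\<close>.
\<close>

section \<open>Conditional independence of random elements\<close>

lemma measure_pmf_prob_cong_support:
  assumes "\<And>\<omega>. \<omega> \<in> set_pmf P \<Longrightarrow> \<omega> \<in> A \<longleftrightarrow> \<omega> \<in> B"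
  shows "measure_pmf.prob P A = measure_pmf.prob P B"
  by (metis (no_types, lifting) Int_iff assms equalityI measure_Int_set_pmf subsetI)

lemma measure_pmf_prob_mono_pred:
  "(\<And>\<omega>. Q \<omega> \<Longrightarrow> R \<omega>) \<Longrightarrow> measure_pmf.prob P {\<omega>. Q \<omega>} \<le> measure_pmf.prob P {\<omega>. R \<omega>}"
  by (rule measure_pmf.finite_measure_mono) auto

lemma measure_pmf_prob_null_pred:
  "(\<And>\<omega>. Q \<omega> \<Longrightarrow> R \<omega>) \<Longrightarrow> measure_pmf.prob P {\<omega>. R \<omega>} = 0 \<Longrightarrow> measure_pmf.prob P {\<omega>. Q \<omega>} = 0"
  by (metis measure_nonneg measure_pmf_prob_mono_pred order_antisym)

lemma cross_multiplication_transfer: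
  fixes a c l m q s :: "'a::field"
  assumes "m * c = a * s" and "l * c = a * q" and "c \<noteq> 0"
  shows "l * s = m * q"
proof -
  have "l * s * c = m * q * c"
    using assms(1,2) by (metis mult.assoc mult.commute)
  then show ?thesis using assms(3) by simp
qed

lemma measure_pmf_prob_conj_eq_pmf:
  "measure_pmf.prob P {\<omega>. Q \<omega> \<and> g \<omega> = t} = pmf (map_pmf (\<lambda>\<omega>. (g \<omega>, Q \<omega>)) P) (t, True)"
  by (simp add: pmf_map vimage_def conj_commute)

lemma measure_pmf_prob_conj_preimage_infsetsum:
  "measure_pmf.prob P {\<omega>. Q \<omega> \<and> g \<omega> \<in> S} = (\<Sum>\<^sub>at\<in>S. measure_pmf.prob P {\<omega>. Q \<omega> \<and> g \<omega> = t})"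
    and abs_summable_measure_pmf_prob_conj:
  "Infinite_Set_Sum.abs_summable_on (\<lambda>t. measure_pmf.prob P {\<omega>. Q \<omega> \<and> g \<omega> = t}) S"
proof -
  define M where "M = map_pmf (\<lambda>\<omega>. (g \<omega>, Q \<omega>)) P"
  have inj: "inj_on (\<lambda>t. (t, True)) S" by (auto simp: inj_on_def)
  have "measure_pmf.prob P {\<omega>. Q \<omega> \<and> g \<omega> \<in> S} = measure_pmf.prob M (S \<times> {True})"
    unfolding M_def by (simp add: vimage_def conj_commute)
  also have "\<dots> = infsetsum (pmf M) ((\<lambda>t. (t, True)) ` S)"
    by (simp add: measure_pmf_conv_infsetsum image_Pair_const)
  also have "\<dots> = (\<Sum>\<^sub>at\<in>S. pmf M (t, True))"
    using infsetsum_reindex[OF inj] by simp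
  finally show "measure_pmf.prob P {\<omega>. Q \<omega> \<and> g \<omega> \<in> S} = (\<Sum>\<^sub>at\<in>S. measure_pmf.prob P {\<omega>. Q \<omega> \<and> g \<omega> = t})"
    unfolding M_def measure_pmf_prob_conj_eq_pmf .
  have "Infinite_Set_Sum.abs_summable_on (pmf M) ((\<lambda>t. (t, True)) ` S)" by (rule pmf_abs_summable)
  then show "Infinite_Set_Sum.abs_summable_on (\<lambda>t. measure_pmf.prob P {\<omega>. Q \<omega> \<and> g \<omega> = t}) S"
    unfolding M_def measure_pmf_prob_conj_eq_pmf abs_summable_on_reindex_iff[OF inj, symmetric]
    by (simp add: comp_def)
qed

lemma measure_pmf_prob_conj_preimage_scaled_eq:
  assumes "\<And>t. measure_pmf.prob P {\<omega>. Q\<^sub>1 \<omega> \<and> g \<omega> = t} * c\<^sub>1 =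
               measure_pmf.prob P {\<omega>. Q\<^sub>2 \<omega> \<and> g \<omega> = t} * c\<^sub>2"
  shows "measure_pmf.prob P {\<omega>. Q\<^sub>1 \<omega> \<and> g \<omega> \<in> S} * c\<^sub>1 =
         measure_pmf.prob P {\<omega>. Q\<^sub>2 \<omega> \<and> g \<omega> \<in> S} * c\<^sub>2"
  unfolding measure_pmf_prob_conj_preimage_infsetsum
  by (simp add: infsetsum_cmult_left[symmetric] abs_summable_measure_pmf_prob_conj assms)

text \<open>
  The conditional independence of \<^const>\<open>cond_indep\<close>, for arbitrary random elements instead of
  single variables and value tuples, so that pairs of variables can be treated as one.
\<close>
definition indep_given :: "'w pmf \<Rightarrow> ('w \<Rightarrow> 'a) \<Rightarrow> ('w \<Rightarrow> 'b) \<Rightarrow> ('w \<Rightarrow> 'c) \<Rightarrow> bool" where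
  "indep_given P A B C \<longleftrightarrow> (\<forall>x y w.
     measure_pmf.prob P {\<omega>. A \<omega> = x \<and> B \<omega> = y \<and> C \<omega> = w} * measure_pmf.prob P {\<omega>. C \<omega> = w} =
     measure_pmf.prob P {\<omega>. A \<omega> = x \<and> C \<omega> = w} * measure_pmf.prob P {\<omega>. B \<omega> = y \<and> C \<omega> = w})"

lemma cond_indep_iff_indep_given: "cond_indep P X a b W \<longleftrightarrow> indep_given P (X a) (X b) (vals X W)"
  unfolding cond_indep_def indep_given_def ..

lemma indep_givenD:
  "indep_given P A B C \<Longrightarrow>
     measure_pmf.prob P {\<omega>. A \<omega> = x \<and> B \<omega> = y \<and> C \<omega> = w} * measure_pmf.prob P {\<omega>. C \<omega> = w} =
     measure_pmf.prob P {\<omega>. A \<omega> = x \<and> C \<omega> = w} * measure_pmf.prob P {\<omega>. B \<omega> = y \<and> C \<omega> = w}"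
  unfolding indep_given_def by blast

lemma indep_given_sym: "indep_given P A B C \<Longrightarrow> indep_given P B A C"
  unfolding indep_given_def by (simp add: conj_left_commute mult.commute)

lemma indep_given_self: "indep_given P A C C"
  unfolding indep_given_def
proof (intro allI)
  fix x y w
  show "measure_pmf.prob P {\<omega>. A \<omega> = x \<and> C \<omega> = y \<and> C \<omega> = w} * measure_pmf.prob P {\<omega>. C \<omega> = w} =
     measure_pmf.prob P {\<omega>. A \<omega> = x \<and> C \<omega> = w} * measure_pmf.prob P {\<omega>. C \<omega> = y \<and> C \<omega> = w}"
  proof (cases "y = w")
    case False
    then have "{\<omega>. A \<omega> = x \<and> C \<omega> = y \<and> C \<omega> = w} = {}" "{\<omega>. C \<omega> = y \<and> C \<omega> = w} = {}"
      by auto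
    then show ?thesis by (simp only: measure_empty mult_zero_left mult_zero_right)
  qed (simp add: mult.commute)
qed

lemma indep_given_function_right:
  assumes indep: "indep_given P A B C" and B': "\<forall>\<omega>\<in>set_pmf P. B' \<omega> = g (B \<omega>)"
  shows "indep_given P A B' C"
  unfolding indep_given_def
proof (intro allI)
  fix x y w
  have "measure_pmf.prob P {\<omega>. (A \<omega> = x \<and> C \<omega> = w) \<and> B \<omega> \<in> g -` {y}} * measure_pmf.prob P {\<omega>. C \<omega> = w} =
        measure_pmf.prob P {\<omega>. C \<omega> = w \<and> B \<omega> \<in> g -` {y}} * measure_pmf.prob P {\<omega>. A \<omega> = x \<and> C \<omega> = w}"
    using indep_givenD[OF indep]
    by (intro measure_pmf_prob_conj_preimage_scaled_eq) (simp add: conj_ac mult.commute)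
  moreover have "measure_pmf.prob P {\<omega>. (A \<omega> = x \<and> C \<omega> = w) \<and> B \<omega> \<in> g -` {y}} =
                 measure_pmf.prob P {\<omega>. A \<omega> = x \<and> B' \<omega> = y \<and> C \<omega> = w}"
    and "measure_pmf.prob P {\<omega>. C \<omega> = w \<and> B \<omega> \<in> g -` {y}} = measure_pmf.prob P {\<omega>. B' \<omega> = y \<and> C \<omega> = w}"
    using B' by (auto intro: measure_pmf_prob_cong_support)
  ultimately show "measure_pmf.prob P {\<omega>. A \<omega> = x \<and> B' \<omega> = y \<and> C \<omega> = w} * measure_pmf.prob P {\<omega>. C \<omega> = w} =
     measure_pmf.prob P {\<omega>. A \<omega> = x \<and> C \<omega> = w} * measure_pmf.prob P {\<omega>. B' \<omega> = y \<and> C \<omega> = w}"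
    by (simp add: mult.commute)
qed

lemma indep_given_recode_condition:
  assumes indep: "indep_given P A B C"
    and recode: "\<forall>\<omega>\<in>set_pmf P. C' \<omega> = h (C \<omega>) \<and> C \<omega> = h' (C' \<omega>)"
  shows "indep_given P A B C'"
  unfolding indep_given_def
proof (intro allI)
  fix x y w'
  show "measure_pmf.prob P {\<omega>. A \<omega> = x \<and> B \<omega> = y \<and> C' \<omega> = w'} * measure_pmf.prob P {\<omega>. C' \<omega> = w'} =
    measure_pmf.prob P {\<omega>. A \<omega> = x \<and> C' \<omega> = w'} * measure_pmf.prob P {\<omega>. B \<omega> = y \<and> C' \<omega> = w'}"
  proof (cases "\<exists>\<omega>\<in>set_pmf P. C' \<omega> = w'")
    case True
    then have "h (h' w') = w'" using recode by metis
    then have "\<forall>\<omega>\<in>set_pmf P. C' \<omega> = w' \<longleftrightarrow> C \<omega> = h' w'" using recode by metis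
    then have "measure_pmf.prob P {\<omega>. Q \<omega> \<and> C' \<omega> = w'} = measure_pmf.prob P {\<omega>. Q \<omega> \<and> C \<omega> = h' w'}" for Q
      by (auto intro: measure_pmf_prob_cong_support)
    from this[of "\<lambda>\<omega>. A \<omega> = x \<and> B \<omega> = y"] this[of "\<lambda>_. True"] this[of "\<lambda>\<omega>. A \<omega> = x"] this[of "\<lambda>\<omega>. B \<omega> = y"]
    show ?thesis using indep_givenD[OF indep, of x y "h' w'"] by simp
  next
    case False
    then have "measure_pmf.prob P {\<omega>. C' \<omega> = w'} = 0"
      by (subst measure_pmf_zero_iff) auto
    moreover have "measure_pmf.prob P {\<omega>. A \<omega> = x \<and> C' \<omega> = w'} = 0"
      using calculation by (rule measure_pmf_prob_null_pred[rotated]) simp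
    ultimately show ?thesis by simp
  qed
qed

lemma indep_given_weak_union:
  assumes indep: "indep_given P A (\<lambda>\<omega>. (B \<omega>, B' \<omega>)) C"
  shows "indep_given P A B (\<lambda>\<omega>. (B' \<omega>, C \<omega>))"
  unfolding indep_given_def split_paired_All
proof (intro allI)
  fix x y y' w
  have joint: "measure_pmf.prob P {\<omega>. A \<omega> = x \<and> B \<omega> = y \<and> B' \<omega> = y' \<and> C \<omega> = w} * measure_pmf.prob P {\<omega>. C \<omega> = w} =
      measure_pmf.prob P {\<omega>. A \<omega> = x \<and> C \<omega> = w} * measure_pmf.prob P {\<omega>. B \<omega> = y \<and> B' \<omega> = y' \<and> C \<omega> = w}"
    using indep_givenD[OF indep, of x "(y, y')" w] by simp
  have "indep_given P A B' C"
    using indep by (rule indep_given_function_right[where g = snd]) simp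
  then have marginal: "measure_pmf.prob P {\<omega>. A \<omega> = x \<and> B' \<omega> = y' \<and> C \<omega> = w} * measure_pmf.prob P {\<omega>. C \<omega> = w} =
      measure_pmf.prob P {\<omega>. A \<omega> = x \<and> C \<omega> = w} * measure_pmf.prob P {\<omega>. B' \<omega> = y' \<and> C \<omega> = w}"
    by (rule indep_givenD)
  show "measure_pmf.prob P {\<omega>. A \<omega> = x \<and> B \<omega> = y \<and> (B' \<omega>, C \<omega>) = (y', w)} * measure_pmf.prob P {\<omega>. (B' \<omega>, C \<omega>) = (y', w)} =
    measure_pmf.prob P {\<omega>. A \<omega> = x \<and> (B' \<omega>, C \<omega>) = (y', w)} * measure_pmf.prob P {\<omega>. B \<omega> = y \<and> (B' \<omega>, C \<omega>) = (y', w)}"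
  proof (cases "measure_pmf.prob P {\<omega>. C \<omega> = w} = 0")
    case True
    then have "measure_pmf.prob P {\<omega>. A \<omega> = x \<and> B' \<omega> = y' \<and> C \<omega> = w} = 0"
      "measure_pmf.prob P {\<omega>. B' \<omega> = y' \<and> C \<omega> = w} = 0"
      by (auto elim!: measure_pmf_prob_null_pred[rotated])
    then show ?thesis by simp
  next
    case False
    then show ?thesis
      using cross_multiplication_transfer[OF marginal joint] by simp
  qed
qed

lemma indep_given_contraction:
  assumes indep: "indep_given P A B' C" and indep_cond: "indep_given P A B (\<lambda>\<omega>. (B' \<omega>, C \<omega>))"
  shows "indep_given P A (\<lambda>\<omega>. (B \<omega>, B' \<omega>)) C"
  unfolding indep_given_def split_paired_All
proof (intro allI)
  fix x y y' w
  have marginal: "measure_pmf.prob P {\<omega>. A \<omega> = x \<and> C \<omega> = w} * measure_pmf.prob P {\<omega>. B' \<omega> = y' \<and> C \<omega> = w} =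
      measure_pmf.prob P {\<omega>. A \<omega> = x \<and> B' \<omega> = y' \<and> C \<omega> = w} * measure_pmf.prob P {\<omega>. C \<omega> = w}"
    using indep_givenD[OF indep, of x y' w] by simp
  have joint: "measure_pmf.prob P {\<omega>. A \<omega> = x \<and> B \<omega> = y \<and> B' \<omega> = y' \<and> C \<omega> = w} * measure_pmf.prob P {\<omega>. B' \<omega> = y' \<and> C \<omega> = w} =
      measure_pmf.prob P {\<omega>. A \<omega> = x \<and> B' \<omega> = y' \<and> C \<omega> = w} * measure_pmf.prob P {\<omega>. B \<omega> = y \<and> B' \<omega> = y' \<and> C \<omega> = w}"
    using indep_givenD[OF indep_cond, of x y "(y', w)"] by simp
  show "measure_pmf.prob P {\<omega>. A \<omega> = x \<and> (B \<omega>, B' \<omega>) = (y, y') \<and> C \<omega> = w} * measure_pmf.prob P {\<omega>. C \<omega> = w} =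
    measure_pmf.prob P {\<omega>. A \<omega> = x \<and> C \<omega> = w} * measure_pmf.prob P {\<omega>. (B \<omega>, B' \<omega>) = (y, y') \<and> C \<omega> = w}"
  proof (cases "measure_pmf.prob P {\<omega>. B' \<omega> = y' \<and> C \<omega> = w} = 0")
    case True
    then have "measure_pmf.prob P {\<omega>. A \<omega> = x \<and> B \<omega> = y \<and> B' \<omega> = y' \<and> C \<omega> = w} = 0"
      "measure_pmf.prob P {\<omega>. B \<omega> = y \<and> B' \<omega> = y' \<and> C \<omega> = w} = 0"
      by (auto elim!: measure_pmf_prob_null_pred[rotated])
    then show ?thesis by simp
  next
    case False
    then show ?thesis
      using cross_multiplication_transfer[OF marginal joint] by simp
  qed
qed

lemma cond_indep_sym: "cond_indep P X a b W \<Longrightarrow> cond_indep P X b a W"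
  unfolding cond_indep_iff_indep_given by (rule indep_given_sym)

lemma vals_apply: "v \<in> W \<Longrightarrow> vals X W \<omega> v = X v \<omega>"
  unfolding vals_def by simp

lemma indep_given_vals_insert_iff:
  "indep_given P A B (vals X (insert v W)) \<longleftrightarrow> indep_given P A B (\<lambda>\<omega>. (X v \<omega>, vals X W \<omega>))"
proof
  show "indep_given P A B (vals X (insert v W)) \<Longrightarrow> indep_given P A B (\<lambda>\<omega>. (X v \<omega>, vals X W \<omega>))"
    by (rule indep_given_recode_condition[where h = "\<lambda>u. (u v, restrict u W)" and h' = "\<lambda>(t, u). u(v := t)"])
      (auto simp: vals_def fun_eq_iff)
  show "indep_given P A B (\<lambda>\<omega>. (X v \<omega>, vals X W \<omega>)) \<Longrightarrow> indep_given P A B (vals X (insert v W))"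
    by (rule indep_given_recode_condition[where h' = "\<lambda>u. (u v, restrict u W)" and h = "\<lambda>(t, u). u(v := t)"])
      (auto simp: vals_def fun_eq_iff)
qed

lemma FD_on_support:
  assumes "FD P X u v"
  obtains f where "\<forall>\<omega>\<in>set_pmf P. X v \<omega> = f (X u \<omega>)"
  using assms unfolding FD_def AE_measure_pmf_iff by blast

lemma FD_refl: "FD P X u u"
  unfolding FD_def by (rule exI[of _ id]) simp

lemma cond_indep_determined:
  assumes "FD P X u v" and "u \<in> W"
  shows "cond_indep P X c v W"
proof -
  obtain f where f: "\<forall>\<omega>\<in>set_pmf P. X v \<omega> = f (X u \<omega>)"
    using assms(1) by (rule FD_on_support)
  have "indep_given P (X c) (vals X W) (vals X W)"
    by (rule indep_given_self)
  then show ?thesis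
    unfolding cond_indep_iff_indep_given
    by (rule indep_given_function_right[where g = "\<lambda>w. f (w u)"]) (simp add: f vals_apply assms(2))
qed

lemma cond_indep_FD_right:
  assumes "FD P X u v" and "cond_indep P X c u W"
  shows "cond_indep P X c v W"
proof -
  obtain f where f: "\<forall>\<omega>\<in>set_pmf P. X v \<omega> = f (X u \<omega>)"
    using assms(1) by (rule FD_on_support)
  with assms(2) show ?thesis
    unfolding cond_indep_iff_indep_given by (rule indep_given_function_right)
qed

lemma cond_indep_insert_determined:
  assumes "FD P X u v" and "u \<in> W" and "cond_indep P X a b W"
  shows "cond_indep P X a b (insert v W)"
proof -
  obtain f where f: "\<forall>\<omega>\<in>set_pmf P. X v \<omega> = f (X u \<omega>)"
    using assms(1) by (rule FD_on_support)
  from assms(3) show ?thesis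
    unfolding cond_indep_iff_indep_given
    by (rule indep_given_recode_condition[where h = "\<lambda>w. w(v := f (w u))" and h' = "\<lambda>w. restrict w W"])
      (auto simp: vals_def fun_eq_iff f assms(2))
qed

lemma cond_indep_contraction_FD:
  assumes "FD P X u v" and "cond_indep P X a u W" and "cond_indep P X a b (insert u W)"
  shows "cond_indep P X a b (insert v W)"
proof -
  obtain f where f: "\<forall>\<omega>\<in>set_pmf P. X v \<omega> = f (X u \<omega>)"
    using assms(1) by (rule FD_on_support)
  have "indep_given P (X a) (\<lambda>\<omega>. (X b \<omega>, X u \<omega>)) (vals X W)"
    using assms(2,3) unfolding cond_indep_iff_indep_given indep_given_vals_insert_iff
    by (rule indep_given_contraction)
  then have "indep_given P (X a) (\<lambda>\<omega>. (X b \<omega>, X v \<omega>)) (vals X W)"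
    by (rule indep_given_function_right[where g = "\<lambda>(y, t). (y, f t)"]) (simp add: f)
  then show ?thesis
    unfolding cond_indep_iff_indep_given indep_given_vals_insert_iff
    by (rule indep_given_weak_union)
qed

lemma vals_empty: "vals X {} \<omega> = (\<lambda>_. undefined)"
  unfolding vals_def by (simp add: restrict_def)

lemma not_cond_indep_empty_FD:
  assumes "FD P X u v"
    and "y \<noteq> y'" "measure_pmf.prob P {\<omega>. X v \<omega> = y} > 0" "measure_pmf.prob P {\<omega>. X v \<omega> = y'} > 0"
  shows "\<not> cond_indep P X u v {}"
proof
  assume indep: "cond_indep P X u v {}"
  obtain f where f: "\<forall>\<omega>\<in>set_pmf P. X v \<omega> = f (X u \<omega>)"
    using assms(1) by (rule FD_on_support)
  obtain \<omega>\<^sub>0 where \<omega>\<^sub>0: "\<omega>\<^sub>0 \<in> set_pmf P" "X v \<omega>\<^sub>0 = y"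
    using assms(3) by (metis (mono_tags) measure_pmf_zero_iff disjoint_iff less_irrefl mem_Collect_eq)
  define t where "t = X u \<omega>\<^sub>0"
  have "measure_pmf.prob P {\<omega>. X u \<omega> = t \<and> X v \<omega> = y'} =
    measure_pmf.prob P {\<omega>. X u \<omega> = t} * measure_pmf.prob P {\<omega>. X v \<omega> = y'}"
    using indep[unfolded cond_indep_def, rule_format, of t y' "\<lambda>_. undefined"] by (simp add: vals_empty)
  moreover have "measure_pmf.prob P {\<omega>. X u \<omega> = t \<and> X v \<omega> = y'} = 0"
    using f \<omega>\<^sub>0 assms(2) unfolding t_def by (subst measure_pmf_zero_iff) auto
  moreover have "measure_pmf.prob P {\<omega>. X u \<omega> = t} > 0"
    using \<omega>\<^sub>0(1) by (rule measure_pmf_posI) (simp add: t_def)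
  ultimately show False
    using assms(4) by simp
qed

section \<open>Paths and m-separation\<close>

definition collider_triple :: "('v \<times> 'v) set \<Rightarrow> ('v \<times> 'v) set \<Rightarrow> 'v \<Rightarrow> 'v \<Rightarrow> 'v \<Rightarrow> bool" where
  "collider_triple D B x y z \<longleftrightarrow> arrow_into D B x y \<and> arrow_into D B z y"

definition active_triple :: "('v \<times> 'v) set \<Rightarrow> ('v \<times> 'v) set \<Rightarrow> 'v set \<Rightarrow> 'v \<Rightarrow> 'v \<Rightarrow> 'v \<Rightarrow> bool" where
  "active_triple D B W x y z \<longleftrightarrow>
     (if collider_triple D B x y z then \<exists>d. (y, d) \<in> D\<^sup>* \<and> d \<in> W else y \<notin> W)"

lemma not_blocked_iff_active:
  "\<not> blocked D B W p \<longleftrightarrow>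
     (\<forall>i. 0 < i \<longrightarrow> Suc i < length p \<longrightarrow> active_triple D B W (p ! (i - 1)) (p ! i) (p ! Suc i))"
  unfolding blocked_def active_triple_def collider_triple_def collider_def by auto

lemma blocked_at_non_collider:
  "0 < i \<Longrightarrow> Suc i < length p \<Longrightarrow> \<not> collider_triple D B (p ! (i - 1)) (p ! i) (p ! Suc i) \<Longrightarrow>
    p ! i \<in> W \<Longrightarrow> blocked D B W p"
  unfolding blocked_def collider_def collider_triple_def by (intro exI[of _ i]) simp

lemma active_triple_sym: "active_triple D B W x y z \<longleftrightarrow> active_triple D B W z y x"
  unfolding active_triple_def collider_triple_def by auto

lemma adj_sym: "adj D B x y \<Longrightarrow> adj D B y x"
  unfolding adj_def by blast

lemma is_path_nth_first: "is_path D B a b p \<Longrightarrow> p ! 0 = a"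
  unfolding is_path_def by (auto simp: hd_conv_nth)

lemma is_path_nth_last: "is_path D B a b p \<Longrightarrow> p ! (length p - 1) = b"
  unfolding is_path_def by (auto simp: last_conv_nth)

lemma is_path_mono: "is_path D B a b p \<Longrightarrow> D \<subseteq> D' \<Longrightarrow> B \<subseteq> B' \<Longrightarrow> is_path D' B' a b p"
  unfolding is_path_def adj_def by blast

lemma is_path_subset:
  assumes p: "is_path D B a b p" and "D \<subseteq> V \<times> V" "B \<subseteq> V \<times> V" "a \<in> V"
  shows "set p \<subseteq> V"
proof
  fix x assume "x \<in> set p"
  then obtain j where j: "j < length p" "p ! j = x" by (auto simp: in_set_conv_nth)
  show "x \<in> V"
  proof (cases j)
    case 0
    then show ?thesis using assms j is_path_nth_first by metis
  next
    case (Suc i)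
    then have "adj D B (p ! i) x" using p j unfolding is_path_def by auto
    then show ?thesis using assms(2,3) unfolding adj_def by blast
  qed
qed

lemma is_path_rev:
  assumes "is_path D B a b p"
  shows "is_path D B b a (rev p)"
  unfolding is_path_def
proof (intro conjI allI impI)
  show "rev p \<noteq> []" "hd (rev p) = b" "last (rev p) = a" "distinct (rev p)"
    using assms by (auto simp: is_path_def hd_rev last_rev)
  fix i assume i: "Suc i < length (rev p)"
  have "adj D B (p ! (length p - Suc (Suc i))) (p ! Suc (length p - Suc (Suc i)))"
    using assms i unfolding is_path_def by auto
  moreover have "Suc (length p - Suc (Suc i)) = length p - Suc i" using i by auto
  ultimately show "adj D B (rev p ! i) (rev p ! Suc i)"
    using i by (auto simp: rev_nth intro: adj_sym)
qed

lemma not_blocked_rev: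
  assumes "\<not> blocked D B W p"
  shows "\<not> blocked D B W (rev p)"
  unfolding not_blocked_iff_active
proof (intro allI impI)
  fix i assume i: "0 < i" "Suc i < length (rev p)"
  define j where "j = length p - Suc i"
  have "0 < j" "Suc j < length p" using i by (auto simp: j_def)
  then have "active_triple D B W (p ! (j - 1)) (p ! j) (p ! Suc j)"
    using assms unfolding not_blocked_iff_active by blast
  moreover have "rev p ! (i - 1) = p ! Suc j" "rev p ! i = p ! j" "rev p ! Suc i = p ! (j - 1)"
    using i by (auto simp: rev_nth j_def Suc_diff_Suc)
  ultimately show "active_triple D B W (rev p ! (i - 1)) (rev p ! i) (rev p ! Suc i)"
    by (simp add: active_triple_sym)
qed

lemma msep_sym: "msep D B a b W \<Longrightarrow> msep D B b a W"
  unfolding msep_def by (metis is_path_rev not_blocked_rev rev_rev_ident)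

lemma msep_irrefl: "\<not> msep D B a a W"
proof -
  have "is_path D B a a [a]" "\<not> blocked D B W [a]"
    unfolding is_path_def blocked_def by auto
  then show ?thesis unfolding msep_def by blast
qed

lemma is_MAG_dmg: "is_MAG V D B \<Longrightarrow> is_dmg V D B"
  and is_MAG_acyclic: "is_MAG V D B \<Longrightarrow> (v, v) \<notin> D\<^sup>+"
  and is_MAG_bidirected_not_ancestral: "is_MAG V D B \<Longrightarrow> (a, b) \<in> B \<Longrightarrow> (a, b) \<notin> D\<^sup>+"
  and is_MAG_maximal:
    "is_MAG V D B \<Longrightarrow> a \<in> V \<Longrightarrow> b \<in> V \<Longrightarrow> a \<noteq> b \<Longrightarrow> \<not> adj D B a b \<Longrightarrow> \<exists>W\<subseteq>V. msep D B a b W"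
  unfolding is_MAG_def by simp_all

lemma GMPD: "GMP P X V D B \<Longrightarrow> a \<in> V \<Longrightarrow> b \<in> V \<Longrightarrow> W \<subseteq> V \<Longrightarrow> msep D B a b W \<Longrightarrow> cond_indep P X a b W"
  unfolding GMP_def by blast

lemma msep_isolated:
  assumes "\<And>x. \<not> adj D B x b" and "a \<noteq> b"
  shows "msep D B a b {}"
  unfolding msep_def
proof (intro conjI allI impI)
  fix p assume p: "is_path D B a b p"
  then have "length p \<noteq> 1" and "length p \<noteq> 0"
    using assms(2) is_path_nth_first is_path_nth_last unfolding is_path_def by fastforce+
  then have "Suc (length p - 2) < length p" "Suc (length p - 2) = length p - 1" by arith+
  then have "adj D B (p ! (length p - 2)) b"
    using p is_path_nth_last unfolding is_path_def by metis
  with assms(1) show "blocked D B {} p" by blast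
qed auto

lemma nth_in_subset: "set p \<subseteq> A \<Longrightarrow> i < length p \<Longrightarrow> p ! i \<in> A"
  using nth_mem by blast

lemma inner_triple_in:
  "set p \<subseteq> A \<Longrightarrow> Suc i < length p \<Longrightarrow> p ! (i - 1) \<in> A \<and> p ! i \<in> A \<and> p ! Suc i \<in> A"
  by (simp add: nth_in_subset)

lemma is_path_snoc:
  assumes "is_path D B a b p" "adj D B b c" "c \<notin> set p"
  shows "is_path D B a c (p @ [c])"
  unfolding is_path_def
proof (intro conjI allI impI)
  fix i assume "Suc i < length (p @ [c])"
  then consider "Suc i < length p" | "i = length p - 1" by fastforce
  then show "adj D B ((p @ [c]) ! i) ((p @ [c]) ! Suc i)"
    using assms unfolding is_path_def by cases (auto simp: nth_append last_conv_nth)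
qed (use assms in \<open>auto simp: is_path_def hd_append\<close>)

lemma unblocked_path_arrowhead_descendant:
  assumes path: "is_path D B a c p" and unblocked: "\<not> blocked D B W p" and "sym B"
  shows "0 < j \<Longrightarrow> j < length p \<Longrightarrow> arrow_into D B (p ! (j - 1)) (p ! j) \<Longrightarrow>
    \<exists>d. (p ! j, d) \<in> D\<^sup>* \<and> (d \<in> W \<or> d = c)"
proof (induction "length p - j" arbitrary: j rule: less_induct)
  case less
  show ?case
  proof (cases "Suc j = length p")
    case True
    then have "p ! j = c" using is_path_nth_last[OF path] by (metis diff_Suc_1)
    then show ?thesis by auto
  next
    case False
    then have j: "Suc j < length p" using less.prems by auto
    then have active: "active_triple D B W (p ! (j - 1)) (p ! j) (p ! Suc j)"
      using unblocked less.prems unfolding not_blocked_iff_active by blast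
    show ?thesis
    proof (cases "collider_triple D B (p ! (j - 1)) (p ! j) (p ! Suc j)")
      case True
      then show ?thesis using active unfolding active_triple_def by auto
    next
      case False
      then have "\<not> arrow_into D B (p ! Suc j) (p ! j)"
        using less.prems unfolding collider_triple_def by blast
      moreover have "adj D B (p ! j) (p ! Suc j)" using path j unfolding is_path_def by blast
      ultimately have edge: "(p ! j, p ! Suc j) \<in> D"
        using \<open>sym B\<close> unfolding adj_def arrow_into_def sym_def by blast
      moreover have "length p - Suc j < length p - j" using j by simp
      ultimately obtain d where "(p ! Suc j, d) \<in> D\<^sup>*" "d \<in> W \<or> d = c"
        using less.hyps[of "Suc j"] j by (auto simp: arrow_into_def)
      with edge show ?thesis by (blast intro: converse_rtrancl_into_rtrancl)
    qed
  qed
qed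

lemma unblocked_path_no_arrowhead:
  assumes path: "is_path D B a c p" and unblocked: "\<not> blocked D B W p"
    and "0 < j" "j < length p" "\<not> arrow_into D B (p ! (j - 1)) (p ! j)"
  shows "p ! j \<notin> W \<or> p ! j = c"
proof (cases "Suc j < length p")
  case True
  then have "active_triple D B W (p ! (j - 1)) (p ! j) (p ! Suc j)"
    using unblocked \<open>0 < j\<close> unfolding not_blocked_iff_active by blast
  then show ?thesis using assms(5) unfolding active_triple_def collider_triple_def by auto
next
  case False
  then show ?thesis
    using is_path_nth_last[OF path] \<open>j < length p\<close> by (metis Suc_pred' less_Suc_eq less_nat_zero_code not_less_eq)
qed

lemma nth_take_append_rev_take:
  assumes k: "k < length p" and m: "m < length q" and "p ! k = q ! m"
  shows "length (take (Suc k) p @ rev (take m q)) = Suc (k + m)"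
    and "i \<le> k \<Longrightarrow> (take (Suc k) p @ rev (take m q)) ! i = p ! i"
    and "i \<le> m \<Longrightarrow> (take (Suc k) p @ rev (take m q)) ! (k + m - i) = q ! i"
proof -
  show "length (take (Suc k) p @ rev (take m q)) = Suc (k + m)" using k m by simp
  show p_part: "(take (Suc k) p @ rev (take m q)) ! j = p ! j" if "j \<le> k" for j
    using that k by (simp add: nth_append)
  assume "i \<le> m"
  show "(take (Suc k) p @ rev (take m q)) ! (k + m - i) = q ! i"
  proof (cases "i = m")
    case True
    then show ?thesis using p_part[of k] assms(3) by simp
  next
    case False
    then have "k + m - i = length (take (Suc k) p) + (m - Suc i)" using \<open>i \<le> m\<close> k by simp
    then show ?thesis using \<open>i \<le> m\<close> False m by (simp only: nth_append_length_plus) (simp add: rev_nth)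
  qed
qed

text \<open>\<open>r\<close> runs along \<open>p\<close> to its first vertex \<open>p ! k = q ! m\<close> on \<open>q\<close>, then back along \<open>q\<close>.\<close>
lemma is_path_splice:
  assumes p: "is_path D B a c p" and q: "is_path D B b c q"
  obtains k m r where "k < length p" "m < length q" "is_path D B a b r" "length r = Suc (k + m)"
    "\<And>i. i \<le> k \<Longrightarrow> r ! i = p ! i" "\<And>i. i \<le> m \<Longrightarrow> r ! (k + m - i) = q ! i"
proof -
  have "\<exists>k. p ! k \<in> set q"
    using p q is_path_nth_last unfolding is_path_def by (metis last_in_set)
  define k where "k = (LEAST k. p ! k \<in> set q)"
  have k_in: "p ! k \<in> set q" and k_min: "\<And>j. j < k \<Longrightarrow> p ! j \<notin> set q"
    unfolding k_def using LeastI_ex[OF \<open>\<exists>k. p ! k \<in> set q\<close>] not_less_Least by auto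
  have "k \<le> length p - 1"
    unfolding k_def using p q is_path_nth_last unfolding is_path_def
    by (metis Least_le last_in_set)
  then have k: "k < length p" using p unfolding is_path_def by (simp add: less_eq_iff_succ_less)
  obtain m where m: "m < length q" "q ! m = p ! k" using k_in by (auto simp: in_set_conv_nth)
  define r where "r = take (Suc k) p @ rev (take m q)"
  have len: "length r = Suc (k + m)" and r_p: "\<And>i. i \<le> k \<Longrightarrow> r ! i = p ! i"
    and r_q: "\<And>i. i \<le> m \<Longrightarrow> r ! (k + m - i) = q ! i"
    using nth_take_append_rev_take[OF k m(1) m(2)[symmetric]] unfolding r_def by auto
  have "distinct r"
  proof -
    have "set (take (Suc k) p) \<inter> set (take m q) = {}"
    proof (rule ccontr)
      assume "\<not> ?thesis"
      then obtain x where x: "x \<in> set (take (Suc k) p)" "x \<in> set (take m q)" by blast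
      obtain i where i: "i \<le> k" "p ! i = x" using x(1) k by (auto simp: in_set_conv_nth less_Suc_eq_le)
      obtain j where j: "j < m" "q ! j = x" using x(2) m by (auto simp: in_set_conv_nth)
      have eq: "p ! i = q ! j" using i j by simp
      show False
      proof (cases "i = k")
        case True
        then show False using q m j(1) eq unfolding is_path_def by (simp add: nth_eq_iff_index_eq)
      next
        case False
        then show False using k_min[of i] i(1) j(1) m eq by (metis le_neq_implies_less nth_mem order.strict_trans)
      qed
    qed
    then show ?thesis using p q unfolding r_def is_path_def by auto
  qed
  moreover have "adj D B (r ! j) (r ! Suc j)" if j: "Suc j < length r" for j
  proof (cases "j < k")
    case True
    then show ?thesis using r_p[of j] r_p[of "Suc j"] p k unfolding is_path_def by simp
  next
    case False
    define i where "i = k + m - Suc j"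
    have "i < m" "j = k + m - Suc i" "Suc j = k + m - i" using False j len unfolding i_def by auto
    moreover have "adj D B (q ! i) (q ! Suc i)" using q m \<open>i < m\<close> unfolding is_path_def by simp
    ultimately show ?thesis using r_q[of i] r_q[of "Suc i"] by (simp add: adj_sym)
  qed
  moreover have "r \<noteq> []" using len by auto
  moreover have "hd r = a" "last r = b"
    using \<open>r \<noteq> []\<close> len r_p[of 0] r_q[of 0] is_path_nth_first[OF p] is_path_nth_first[OF q]
    by (simp_all add: hd_conv_nth last_conv_nth)
  ultimately have "is_path D B a b r" unfolding is_path_def by blast
  then show ?thesis using that k m len r_p r_q by blast
qed

section \<open>Removing a vertex with a single neighbour\<close>

locale pendant_vertex =
  fixes V :: "'v set" and D B :: "('v \<times> 'v) set" and Z Xi :: 'v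
  assumes dmg: "is_dmg V D B" and Z_in_V: "Z \<in> V" and adj_Z: "\<And>x. adj D B x Z \<Longrightarrow> x = Xi"
begin

abbreviation "U \<equiv> V - {Z}"
abbreviation "D\<^sub>U \<equiv> D \<inter> (U \<times> U)"
abbreviation "B\<^sub>U \<equiv> B \<inter> (U \<times> U)"

lemma D_subset: "D \<subseteq> V \<times> V" and B_subset: "B \<subseteq> V \<times> V" and sym_B: "sym B"
  using dmg unfolding is_dmg_def by auto

lemma not_through_Z: "(x, Z) \<in> D \<Longrightarrow> (Z, y) \<in> D \<Longrightarrow> False"
  using adj_Z[of x] adj_Z[of y] dmg unfolding adj_def is_dmg_def by auto

lemma Z_not_in_path:
  assumes p: "is_path D B a b p" and "a \<noteq> Z" "b \<noteq> Z"
  shows "Z \<notin> set p"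
proof
  assume "Z \<in> set p"
  then obtain i where i: "i < length p" "p ! i = Z" by (auto simp: in_set_conv_nth)
  have "i \<noteq> 0" "i \<noteq> length p - 1"
    using i assms is_path_nth_first is_path_nth_last by metis+
  then obtain j where j: "i = Suc j" "Suc i < length p" using i by (cases i) auto
  have "adj D B (p ! j) Z" "adj D B (p ! Suc i) Z"
    using p i j unfolding is_path_def by (metis Suc_lessD adj_sym)+
  then have "p ! j = p ! Suc i" using adj_Z by metis
  then show False using p j unfolding is_path_def by (simp add: nth_eq_iff_index_eq)
qed

lemma path_restrict:
  assumes p: "is_path D B a b p" and "a \<in> U" "b \<in> U"
  shows "is_path D\<^sub>U B\<^sub>U a b p"
proof -
  have "set p \<subseteq> U"
    using is_path_subset[OF p D_subset B_subset] Z_not_in_path[OF p] assms(2,3) by blast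
  then have "adj D\<^sub>U B\<^sub>U (p ! i) (p ! Suc i)" if "Suc i < length p" for i
  proof -
    have "p ! i \<in> set p" "p ! Suc i \<in> set p" using that by (simp_all add: Suc_lessD)
    then have "p ! i \<in> U" "p ! Suc i \<in> U" using \<open>set p \<subseteq> U\<close> by blast+
    moreover have "adj D B (p ! i) (p ! Suc i)" using p that unfolding is_path_def by blast
    ultimately show ?thesis unfolding adj_def by blast
  qed
  then show ?thesis using p unfolding is_path_def by blast
qed

lemma restricted_path_subset: "is_path D\<^sub>U B\<^sub>U a b p \<Longrightarrow> a \<in> U \<Longrightarrow> set p \<subseteq> U"
  by (rule is_path_subset) auto

lemma rtrancl_restrict:
  assumes "(u, d) \<in> D\<^sup>*" and "u \<noteq> Z" and "d \<noteq> Z"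
  shows "(u, d) \<in> D\<^sub>U\<^sup>*"
  using assms(1,3)
proof (induction rule: rtrancl_induct)
  case (step y d)
  have "y \<noteq> Z"
  proof
    assume "y = Z"
    then obtain x where "(x, Z) \<in> D" using step.hyps(1) \<open>u \<noteq> Z\<close> by (auto elim: rtranclE)
    then show False using step.hyps(2) \<open>y = Z\<close> not_through_Z by blast
  qed
  then have "(y, d) \<in> D\<^sub>U" using step D_subset by auto
  with step \<open>y \<noteq> Z\<close> show ?case by (meson rtrancl.rtrancl_into_rtrancl)
qed simp

lemma trancl_restrict:
  assumes "(u, d) \<in> D\<^sup>+" and "u \<noteq> Z" and "d \<noteq> Z"
  shows "(u, d) \<in> D\<^sub>U\<^sup>+"
proof -
  obtain y where y: "(u, y) \<in> D" "(y, d) \<in> D\<^sup>*" using tranclD[OF assms(1)] by blast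
  have "y \<noteq> Z"
  proof
    assume "y = Z"
    then obtain x where "(Z, x) \<in> D" using y(2) assms(3) by (auto elim: converse_rtranclE)
    then show False using y(1) \<open>y = Z\<close> not_through_Z by blast
  qed
  then have "(u, y) \<in> D\<^sub>U" using y(1) assms(2) D_subset by auto
  then show ?thesis using rtrancl_restrict[OF y(2) \<open>y \<noteq> Z\<close> assms(3)] by (rule rtrancl_into_trancl2)
qed

lemma Z_not_on_cycle: "(Z, Z) \<notin> D\<^sup>+"
proof
  assume "(Z, Z) \<in> D\<^sup>+"
  then obtain x y where "(Z, y) \<in> D" "(x, Z) \<in> D"
    by (meson converse_tranclE tranclE)
  then show False by (rule not_through_Z[rotated])
qed

lemma arrow_into_restrict_iff:
  "x \<in> U \<Longrightarrow> y \<in> U \<Longrightarrow> arrow_into D\<^sub>U B\<^sub>U x y \<longleftrightarrow> arrow_into D B x y"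
  unfolding arrow_into_def by auto

lemma collider_triple_restrict:
  "x \<in> U \<Longrightarrow> y \<in> U \<Longrightarrow> z \<in> U \<Longrightarrow> collider_triple D\<^sub>U B\<^sub>U x y z \<longleftrightarrow> collider_triple D B x y z"
  unfolding collider_triple_def by (simp add: arrow_into_restrict_iff)

lemma active_triple_lift:
  assumes "x \<in> U" "y \<in> U" "z \<in> U" and active: "active_triple D\<^sub>U B\<^sub>U W' x y z"
    and "W - {Z} \<subseteq> W'" and reach: "\<And>d. d \<in> W' \<Longrightarrow> \<exists>d'\<in>W. (d, d') \<in> D\<^sup>*"
  shows "active_triple D B W x y z"
proof (cases "collider_triple D B x y z")
  case True
  then obtain d where "(y, d) \<in> D\<^sub>U\<^sup>*" "d \<in> W'"
    using active collider_triple_restrict assms(1-3) unfolding active_triple_def by auto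
  moreover have "D\<^sub>U\<^sup>* \<subseteq> D\<^sup>*" by (rule rtrancl_mono) blast
  ultimately show ?thesis
    using True reach unfolding active_triple_def by (meson rtrancl_trans subsetD)
next
  case False
  then show ?thesis
    using active collider_triple_restrict assms(1-3,5) unfolding active_triple_def by auto
qed

lemma active_triple_restrict:
  assumes "x \<in> U" "y \<in> U" "z \<in> U" "Z \<notin> W" and active: "active_triple D B W x y z"
  shows "active_triple D\<^sub>U B\<^sub>U W x y z"
proof (cases "collider_triple D B x y z")
  case True
  then obtain d where "(y, d) \<in> D\<^sup>*" "d \<in> W" using active unfolding active_triple_def by auto
  moreover have "y \<noteq> Z" "d \<noteq> Z" using assms(2,4) calculation(2) by auto
  ultimately have "(y, d) \<in> D\<^sub>U\<^sup>*" "d \<in> W" using rtrancl_restrict by auto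
  then show ?thesis
    using True collider_triple_restrict[OF assms(1-3)] unfolding active_triple_def by auto
next
  case False
  then show ?thesis
    using active collider_triple_restrict[OF assms(1-3)] unfolding active_triple_def by auto
qed

lemma restricted_path_active_lift:
  assumes p: "is_path D\<^sub>U B\<^sub>U a c p" and "a \<in> U" and unblocked: "\<not> blocked D\<^sub>U B\<^sub>U W' p"
    and "W - {Z} \<subseteq> W'" and "\<And>d. d \<in> W' \<Longrightarrow> \<exists>d'\<in>W. (d, d') \<in> D\<^sup>*"
    and i: "0 < i" "Suc i < length p"
  shows "active_triple D B W (p ! (i - 1)) (p ! i) (p ! Suc i)"
proof (rule active_triple_lift)
  show "p ! (i - 1) \<in> U" "p ! i \<in> U" "p ! Suc i \<in> U"
    using inner_triple_in[OF restricted_path_subset[OF p \<open>a \<in> U\<close>] i(2)] by auto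
  show "active_triple D\<^sub>U B\<^sub>U W' (p ! (i - 1)) (p ! i) (p ! Suc i)"
    using unblocked i unfolding not_blocked_iff_active by blast
qed (use assms in auto)

lemma msep_restrict:
  assumes sep: "msep D B a b W" and "a \<in> U" and "a \<notin> W'" "b \<notin> W'"
    and "W - {Z} \<subseteq> W'" and "\<And>d. d \<in> W' \<Longrightarrow> \<exists>d'\<in>W. (d, d') \<in> D\<^sup>*"
  shows "msep D\<^sub>U B\<^sub>U a b W'"
  unfolding msep_def
proof (intro conjI allI impI)
  fix p assume p: "is_path D\<^sub>U B\<^sub>U a b p"
  show "blocked D\<^sub>U B\<^sub>U W' p"
  proof (rule ccontr)
    assume "\<not> blocked D\<^sub>U B\<^sub>U W' p"
    then have "\<not> blocked D B W p"
      unfolding not_blocked_iff_active[of D B] using restricted_path_active_lift[OF p] assms(2,5,6) by blast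
    moreover have "is_path D B a b p" using p by (rule is_path_mono) auto
    ultimately show False using sep unfolding msep_def by blast
  qed
qed (use assms in auto)

lemma msep_restrict_delete: "msep D B a b W \<Longrightarrow> a \<in> U \<Longrightarrow> msep D\<^sub>U B\<^sub>U a b (W - {Z})"
  by (rule msep_restrict) (auto simp: msep_def)

lemma msep_unrestrict:
  assumes sep: "msep D\<^sub>U B\<^sub>U a b W" and "a \<in> U" "b \<in> U" "Z \<notin> W"
  shows "msep D B a b W"
  unfolding msep_def
proof (intro conjI allI impI)
  fix p assume p: "is_path D B a b p"
  then have p': "is_path D\<^sub>U B\<^sub>U a b p" using assms(2,3) by (rule path_restrict)
  show "blocked D B W p"
  proof (rule ccontr)
    assume unblocked: "\<not> blocked D B W p"
    have "\<not> blocked D\<^sub>U B\<^sub>U W p"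
      unfolding not_blocked_iff_active
    proof (intro allI impI)
      fix i assume i: "0 < i" "Suc i < length p"
      show "active_triple D\<^sub>U B\<^sub>U W (p ! (i - 1)) (p ! i) (p ! Suc i)"
      proof (rule active_triple_restrict)
        show "p ! (i - 1) \<in> U" "p ! i \<in> U" "p ! Suc i \<in> U"
          using inner_triple_in[OF restricted_path_subset[OF p' \<open>a \<in> U\<close>] i(2)] by auto
        show "active_triple D B W (p ! (i - 1)) (p ! i) (p ! Suc i)"
          using unblocked i unfolding not_blocked_iff_active by blast
      qed (rule \<open>Z \<notin> W\<close>)
    qed
    then show False using sep p' unfolding msep_def by blast
  qed
qed (use sep in \<open>auto simp: msep_def\<close>)

lemma adj_restrict_iff: "x \<in> U \<Longrightarrow> y \<in> U \<Longrightarrow> adj D\<^sub>U B\<^sub>U x y \<longleftrightarrow> adj D B x y"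
  unfolding adj_def by auto

lemma is_dmg_restrict: "is_dmg U D\<^sub>U B\<^sub>U"
proof -
  have "sym B\<^sub>U" using sym_B by (auto simp: sym_def)
  then show ?thesis using dmg unfolding is_dmg_def by (intro conjI) blast+
qed

lemma is_MAG_restrict:
  assumes "is_MAG V D B"
  shows "is_MAG U D\<^sub>U B\<^sub>U"
proof -
  have "D\<^sub>U\<^sup>+ \<subseteq> D\<^sup>+" by (rule trancl_mono_subset) blast
  then have "\<forall>v. (v, v) \<notin> D\<^sub>U\<^sup>+" "\<forall>a b. (a, b) \<in> B\<^sub>U \<longrightarrow> (a, b) \<notin> D\<^sub>U\<^sup>+"
    using assms unfolding is_MAG_def by auto
  moreover have "\<exists>W\<subseteq>U. msep D\<^sub>U B\<^sub>U a b W"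
    if "a \<in> U" "b \<in> U" "a \<noteq> b" "\<not> adj D\<^sub>U B\<^sub>U a b" for a b
  proof -
    have "\<not> adj D B a b" using that adj_restrict_iff by blast
    moreover have "a \<in> V" "b \<in> V" using that by auto
    ultimately obtain W where "W \<subseteq> V" "msep D B a b W"
      using assms \<open>a \<noteq> b\<close> unfolding is_MAG_def by blast
    then have "W - {Z} \<subseteq> U" "msep D\<^sub>U B\<^sub>U a b (W - {Z})"
      using msep_restrict_delete[OF _ \<open>a \<in> U\<close>] by auto
    then show ?thesis by blast
  qed
  ultimately show ?thesis using is_dmg_restrict unfolding is_MAG_def by (intro conjI) auto
qed

lemma GMP_restrict:
  assumes "GMP P X V D B"
  shows "GMP P X U D\<^sub>U B\<^sub>U"
  unfolding GMP_def
proof (intro ballI allI impI)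
  fix a b W assume "a \<in> U" "b \<in> U" "W \<subseteq> U" "msep D\<^sub>U B\<^sub>U a b W"
  then have "msep D B a b W" by (intro msep_unrestrict) auto
  then show "cond_indep P X a b W" using assms \<open>a \<in> U\<close> \<open>b \<in> U\<close> \<open>W \<subseteq> U\<close> unfolding GMP_def by blast
qed

lemma mag_skeleton_restrict: "mag_skeleton D\<^sub>U B\<^sub>U = mag_skeleton D B - {{Xi, Z}}"
proof (intro equalityI subsetI)
  fix e assume "e \<in> mag_skeleton D\<^sub>U B\<^sub>U"
  then obtain a b where e: "e = {a, b}" "(a, b) \<in> D\<^sub>U \<or> (a, b) \<in> B\<^sub>U"
    unfolding mag_skeleton_def by blast
  then have "Z \<notin> e" by auto
  then show "e \<in> mag_skeleton D B - {{Xi, Z}}"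
    using e unfolding mag_skeleton_def by blast
next
  fix e assume e: "e \<in> mag_skeleton D B - {{Xi, Z}}"
  then obtain a b where ab: "e = {a, b}" "(a, b) \<in> D \<or> (a, b) \<in> B"
    unfolding mag_skeleton_def by blast
  have "a \<noteq> Z"
  proof
    assume "a = Z"
    then have "adj D B b Z" using ab(2) unfolding adj_def by blast
    then have "e = {Xi, Z}" using ab(1) \<open>a = Z\<close> adj_Z by blast
    then show False using e by blast
  qed
  moreover have "b \<noteq> Z"
  proof
    assume "b = Z"
    then have "adj D B a Z" using ab(2) unfolding adj_def by blast
    then have "e = {Xi, Z}" using ab(1) \<open>b = Z\<close> adj_Z by blast
    then show False using e by blast
  qed
  moreover have "a \<in> V" "b \<in> V" using ab D_subset B_subset by auto
  ultimately show "e \<in> mag_skeleton D\<^sub>U B\<^sub>U"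
    using ab unfolding mag_skeleton_def by blast
qed

end

section \<open>Adding a functionally determined child\<close>

locale pendant_child = pendant_vertex +
  assumes parent_edge: "(Xi, Z) \<in> D"
begin

lemma Xi_ne_Z: "Xi \<noteq> Z"
  using parent_edge dmg unfolding is_dmg_def by blast

lemma Xi_in_U: "Xi \<in> U"
  using parent_edge D_subset Xi_ne_Z by blast

lemma no_arrowhead_at_parent: "\<not> arrow_into D B Z Xi"
  using parent_edge dmg unfolding is_dmg_def arrow_into_def sym_def by blast

lemma B_restrict: "B\<^sub>U = B"
proof -
  have "(a, b) \<in> B \<Longrightarrow> a \<noteq> Z \<and> b \<noteq> Z" for a b
    using adj_Z[of a] adj_Z[of b] no_arrowhead_at_parent sym_B
    unfolding adj_def arrow_into_def sym_def by blast
  then show ?thesis using B_subset by auto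
qed

lemma msep_to_child:
  assumes "a \<in> U" and "a \<noteq> Xi"
  shows "msep D B a Z {Xi}"
  unfolding msep_def
proof (intro conjI allI impI)
  fix p assume p: "is_path D B a Z p"
  define i where "i = length p - 2"
  have "length p \<noteq> 0" "length p \<noteq> 1"
    using p assms(1) is_path_nth_first is_path_nth_last unfolding is_path_def by fastforce+
  then have i: "Suc i < length p" "Suc i = length p - 1" unfolding i_def by arith+
  then have "adj D B (p ! i) Z" using p is_path_nth_last[OF p] unfolding is_path_def by metis
  then have "p ! i = Xi" by (rule adj_Z)
  then have "0 < i" using assms(2) is_path_nth_first[OF p] by (cases i) auto
  moreover have "\<not> collider_triple D B (p ! (i - 1)) (p ! i) (p ! Suc i)"
    using \<open>p ! i = Xi\<close> i is_path_nth_last[OF p] no_arrowhead_at_parent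
    unfolding collider_triple_def by simp
  ultimately show "blocked D B {Xi} p"
    using i(1) \<open>p ! i = Xi\<close> by (intro blocked_at_non_collider) simp_all
qed (use assms Xi_ne_Z in auto)

lemma msep_restrict_parent:
  assumes sep: "msep D B a b W" and "a \<in> U" "Z \<in> W" "a \<noteq> Xi" "b \<noteq> Xi"
  shows "msep D\<^sub>U B\<^sub>U a b (insert Xi (W - {Z}))"
proof (rule msep_restrict[OF sep \<open>a \<in> U\<close>])
  show "a \<notin> insert Xi (W - {Z})" "b \<notin> insert Xi (W - {Z})"
    using sep assms(4,5) unfolding msep_def by auto
  show "\<exists>d'\<in>W. (d, d') \<in> D\<^sup>*" if "d \<in> insert Xi (W - {Z})" for d
    using that parent_edge \<open>Z \<in> W\<close> by blast
qed blast

lemma msep_child_restrict: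
  assumes sep: "msep D B c Z W" and "c \<in> U" and "Xi \<notin> W"
  shows "msep D\<^sub>U B\<^sub>U c Xi W"
  unfolding msep_def
proof (intro conjI allI impI)
  fix p assume p: "is_path D\<^sub>U B\<^sub>U c Xi p"
  have "Z \<notin> set p" using restricted_path_subset[OF p \<open>c \<in> U\<close>] by blast
  then have q: "is_path D B c Z (p @ [Z])"
    using is_path_mono[OF p] parent_edge by (intro is_path_snoc) (auto simp: adj_def)
  show "blocked D\<^sub>U B\<^sub>U W p"
  proof (rule ccontr)
    assume unblocked: "\<not> blocked D\<^sub>U B\<^sub>U W p"
    have "\<not> blocked D B W (p @ [Z])"
      unfolding not_blocked_iff_active
    proof (intro allI impI)
      fix i assume i: "0 < i" "Suc i < length (p @ [Z])"
      show "active_triple D B W ((p @ [Z]) ! (i - 1)) ((p @ [Z]) ! i) ((p @ [Z]) ! Suc i)"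
      proof (cases "Suc i < length p")
        case True
        then have "active_triple D B W (p ! (i - 1)) (p ! i) (p ! Suc i)"
          using restricted_path_active_lift[OF p \<open>c \<in> U\<close> unblocked] i(1) by blast
        moreover have "i - 1 < length p" using True by simp
        ultimately show ?thesis using True by (simp add: nth_append)
      next
        case False
        then have "i = length p - 1" using i by simp
        then have "(p @ [Z]) ! i = Xi" "(p @ [Z]) ! Suc i = Z"
          using is_path_nth_last[OF p] i by (auto simp: nth_append)
        then show ?thesis
          using no_arrowhead_at_parent \<open>Xi \<notin> W\<close> unfolding active_triple_def collider_triple_def by simp
      qed
    qed
    with q sep show False unfolding msep_def by blast
  qed
qed (use sep assms(3) in \<open>auto simp: msep_def\<close>)

text \<open>A collider at the junction is opened by \<open>Z \<in> W\<close>, a descendant of every ancestor of \<open>Xi\<close>.\<close>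
lemma active_triple_at_junction:
  assumes p: "is_path D\<^sub>U B\<^sub>U a Xi p" "a \<in> U" "\<not> blocked D\<^sub>U B\<^sub>U (W - {Z}) p"
    and q: "is_path D\<^sub>U B\<^sub>U b Xi q" "b \<in> U" "\<not> blocked D\<^sub>U B\<^sub>U (W - {Z}) q"
    and "Z \<in> W" "Xi \<notin> W"
    and k: "0 < k" "k < length p" and m: "0 < m" "m < length q" and v: "p ! k = q ! m"
  shows "active_triple D B W (p ! (k - 1)) (p ! k) (q ! (m - 1))"
proof -
  have in_U: "p ! (k - 1) \<in> U" "p ! k \<in> U" "q ! (m - 1) \<in> U"
    using nth_in_subset[OF restricted_path_subset[OF p(1,2)]] nth_in_subset[OF restricted_path_subset[OF q(1,2)]] k m
    by simp_all
  have sym_B\<^sub>U: "sym B\<^sub>U" using sym_B by (auto simp: sym_def)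
  have not_in_W: "s ! j \<notin> W"
    if s: "is_path D\<^sub>U B\<^sub>U x Xi s" "x \<in> U" "\<not> blocked D\<^sub>U B\<^sub>U (W - {Z}) s"
      and j: "0 < j" "j < length s" "\<not> arrow_into D B (s ! (j - 1)) (s ! j)" for s x j
  proof -
    have "s ! (j - 1) \<in> U" "s ! j \<in> U" using nth_in_subset[OF restricted_path_subset[OF s(1,2)]] j by simp_all
    then have "s ! j \<notin> W - {Z} \<or> s ! j = Xi"
      using unblocked_path_no_arrowhead[OF s(1,3) j(1,2)] j(3) arrow_into_restrict_iff by blast
    then show ?thesis using \<open>s ! j \<in> U\<close> \<open>Xi \<notin> W\<close> by auto
  qed
  show ?thesis
  proof (cases "collider_triple D B (p ! (k - 1)) (p ! k) (q ! (m - 1))")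
    case True
    then have "arrow_into D\<^sub>U B\<^sub>U (p ! (k - 1)) (p ! k)"
      using in_U arrow_into_restrict_iff unfolding collider_triple_def by blast
    then obtain d where d: "(p ! k, d) \<in> D\<^sub>U\<^sup>*" "d \<in> W - {Z} \<or> d = Xi"
      using unblocked_path_arrowhead_descendant[OF p(1,3) sym_B\<^sub>U k] by blast
    have "(p ! k, d) \<in> D\<^sup>*" using d(1) rtrancl_mono[of D\<^sub>U D] by blast
    then have "\<exists>d'\<in>W. (p ! k, d') \<in> D\<^sup>*"
      using d(2) parent_edge \<open>Z \<in> W\<close> by (meson DiffD1 rtrancl.rtrancl_into_rtrancl)
    then show ?thesis using True unfolding active_triple_def by auto
  next
    case False
    then have "\<not> arrow_into D B (p ! (k - 1)) (p ! k) \<or> \<not> arrow_into D B (q ! (m - 1)) (q ! m)"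
      unfolding collider_triple_def v by blast
    then have "p ! k \<notin> W" using not_in_W[OF p k] not_in_W[OF q m] v by auto
    then show ?thesis using False unfolding active_triple_def by simp
  qed
qed

lemma msep_restrict_either_parent:
  assumes sep: "msep D B a b W" and "a \<in> U" "b \<in> U" "Z \<in> W" "Xi \<notin> W"
  shows "msep D\<^sub>U B\<^sub>U a Xi (W - {Z}) \<or> msep D\<^sub>U B\<^sub>U b Xi (W - {Z})"
  \<comment> \<open>Otherwise open paths from \<open>a\<close> and \<open>b\<close> to \<open>Xi\<close>, spliced, give an open path from \<open>a\<close> to \<open>b\<close>.\<close>
proof (rule ccontr)
  assume "\<not> ?thesis"
  moreover have "a \<notin> W - {Z}" "b \<notin> W - {Z}" "Xi \<notin> W - {Z}"
    using sep \<open>Xi \<notin> W\<close> unfolding msep_def by auto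
  ultimately obtain p q where
    p: "is_path D\<^sub>U B\<^sub>U a Xi p" "\<not> blocked D\<^sub>U B\<^sub>U (W - {Z}) p" and
    q: "is_path D\<^sub>U B\<^sub>U b Xi q" "\<not> blocked D\<^sub>U B\<^sub>U (W - {Z}) q"
    unfolding msep_def by blast
  obtain k m r where k: "k < length p" and m: "m < length q" and r: "is_path D\<^sub>U B\<^sub>U a b r"
    and len: "length r = Suc (k + m)"
    and r_p: "\<And>i. i \<le> k \<Longrightarrow> r ! i = p ! i" and r_q: "\<And>i. i \<le> m \<Longrightarrow> r ! (k + m - i) = q ! i"
    using is_path_splice[OF p(1) q(1)] by blast
  have lift: "active_triple D B W (s ! (i - 1)) (s ! i) (s ! Suc i)"
    if "is_path D\<^sub>U B\<^sub>U x Xi s" "x \<in> U" "\<not> blocked D\<^sub>U B\<^sub>U (W - {Z}) s" "0 < i" "Suc i < length s"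
    for s x i
    using restricted_path_active_lift[OF that(1-3) _ _ that(4,5)] by blast
  have "\<not> blocked D B W r"
    unfolding not_blocked_iff_active
  proof (intro allI impI)
    fix i assume i: "0 < i" "Suc i < length r"
    consider "i < k" | "i = k" | "k < i" by linarith
    then show "active_triple D B W (r ! (i - 1)) (r ! i) (r ! Suc i)"
    proof cases
      case 1
      then show ?thesis using lift[OF p(1) \<open>a \<in> U\<close> p(2) i(1)] k r_p by simp
    next
      case 2
      have "r ! Suc k = q ! (m - 1)" using r_q[of "m - 1"] i len 2 by (simp add: Suc_diff_Suc)
      moreover have "active_triple D B W (p ! (k - 1)) (p ! k) (q ! (m - 1))"
        using active_triple_at_junction[OF p(1) \<open>a \<in> U\<close> p(2) q(1) \<open>b \<in> U\<close> q(2) assms(4,5)]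
          i len k m r_p[of k] r_q[of m] 2 by simp
      ultimately show ?thesis using r_p 2 by simp
    next
      case 3
      define j where "j = k + m - i"
      have j: "0 < j" "Suc j \<le> m" using i len 3 unfolding j_def by auto
      have "r ! (i - 1) = q ! Suc j" "r ! i = q ! j" "r ! Suc i = q ! (j - 1)"
        using r_q[of "Suc j"] r_q[of j] r_q[of "j - 1"] j 3 unfolding j_def by (auto simp: Suc_diff_Suc)
      moreover have "active_triple D B W (q ! (j - 1)) (q ! j) (q ! Suc j)"
        using lift[OF q(1) \<open>b \<in> U\<close> q(2) j(1)] j(2) m by simp
      ultimately show ?thesis by (simp add: active_triple_sym)
    qed
  qed
  moreover have "is_path D B a b r" using r by (rule is_path_mono) auto
  ultimately show False using sep unfolding msep_def by blast
qed

lemma is_MAG_of_restrict: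
  assumes MAG: "is_MAG U D\<^sub>U B\<^sub>U"
  shows "is_MAG V D B"
  unfolding is_MAG_def
proof (intro conjI allI impI ballI)
  show "(v, v) \<notin> D\<^sup>+" for v
    using is_MAG_acyclic[OF MAG] Z_not_on_cycle trancl_restrict[of v v] by blast
  show "(a, b) \<notin> D\<^sup>+" if "(a, b) \<in> B" for a b
  proof -
    have "(a, b) \<in> B\<^sub>U" using that B_restrict by simp
    then show ?thesis using is_MAG_bidirected_not_ancestral[OF MAG] trancl_restrict[of a b] by blast
  qed
  show "\<exists>W\<subseteq>V. msep D B a b W" if "a \<in> V" "b \<in> V" "a \<noteq> b \<and> \<not> adj D B a b" for a b
  proof -
    have child: "msep D B x Z {Xi}" if "x \<in> V" "x \<noteq> Z" "\<not> adj D B x Z" for x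
      using that parent_edge by (intro msep_to_child) (auto simp: adj_def)
    consider "a = Z" | "b = Z" | "a \<in> U" "b \<in> U" using \<open>a \<in> V\<close> \<open>b \<in> V\<close> by blast
    then show ?thesis
    proof cases
      case 1
      have "msep D B b Z {Xi}" by (rule child) (use that 1 adj_sym[of D B b Z] in auto)
      then have "msep D B a b {Xi}" using 1 by (simp add: msep_sym)
      moreover have "{Xi} \<subseteq> V" using Xi_in_U by simp
      ultimately show ?thesis by blast
    next
      case 2
      have "msep D B a Z {Xi}" by (rule child) (use that 2 in auto)
      moreover have "{Xi} \<subseteq> V" using Xi_in_U by simp
      ultimately show ?thesis using 2 by blast
    next
      case 3
      then have "\<not> adj D\<^sub>U B\<^sub>U a b" using that adj_restrict_iff by blast
      moreover have "a \<noteq> b" using that by simp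
      ultimately obtain W where "W \<subseteq> U" "msep D\<^sub>U B\<^sub>U a b W"
        using is_MAG_maximal[OF MAG 3] by blast
      then have "msep D B a b W" using 3 by (intro msep_unrestrict) auto
      then show ?thesis using \<open>W \<subseteq> U\<close> by blast
    qed
  qed
qed (rule dmg)

lemma cond_indep_of_msep_to_child:
  assumes GMP: "GMP P X U D\<^sub>U B\<^sub>U" and fd: "FD P X Xi Z"
    and sep: "msep D B a Z W" and "a \<in> U" "W \<subseteq> V"
  shows "cond_indep P X a Z W"
proof (cases "Xi \<in> W")
  case True
  then show ?thesis by (rule cond_indep_determined[OF fd])
next
  case False
  have "W \<subseteq> U" using sep \<open>W \<subseteq> V\<close> unfolding msep_def by blast
  have "msep D\<^sub>U B\<^sub>U a Xi W" using sep \<open>a \<in> U\<close> False by (rule msep_child_restrict)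
  then have "cond_indep P X a Xi W" using GMPD[OF GMP \<open>a \<in> U\<close> Xi_in_U \<open>W \<subseteq> U\<close>] by blast
  then show ?thesis by (rule cond_indep_FD_right[OF fd])
qed

lemma cond_indep_insert_parent:
  assumes GMP: "GMP P X U D\<^sub>U B\<^sub>U" and sep: "msep D B a b W"
    and a: "a \<in> U" and b: "b \<in> U" and "Z \<in> W" "W \<subseteq> V"
  shows "cond_indep P X a b (insert Xi (W - {Z}))"
proof -
  have W: "insert Xi (W - {Z}) \<subseteq> U" using \<open>W \<subseteq> V\<close> Xi_in_U by blast
  consider "a = Xi" | "b = Xi" | "a \<noteq> Xi" "b \<noteq> Xi" by blast
  then show ?thesis
  proof cases
    case 1
    then show ?thesis by (metis cond_indep_determined cond_indep_sym FD_refl insertI1)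
  next
    case 2
    then show ?thesis by (metis cond_indep_determined FD_refl insertI1)
  next
    case 3
    then have "msep D\<^sub>U B\<^sub>U a b (insert Xi (W - {Z}))"
      using msep_restrict_parent[OF sep a \<open>Z \<in> W\<close>] by blast
    then show ?thesis using GMPD[OF GMP a b W] by blast
  qed
qed

lemma cond_indep_of_msep_in_U:
  assumes GMP: "GMP P X U D\<^sub>U B\<^sub>U" and fd: "FD P X Xi Z"
    and sep: "msep D B a b W" and a: "a \<in> U" and b: "b \<in> U" and "W \<subseteq> V"
  shows "cond_indep P X a b W"
proof -
  define W' where "W' = W - {Z}"
  have W': "W' \<subseteq> U" using \<open>W \<subseteq> V\<close> unfolding W'_def by blast
  have "msep D\<^sub>U B\<^sub>U a b W'" unfolding W'_def using sep a by (rule msep_restrict_delete)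
  then have indep: "cond_indep P X a b W'" using GMPD[OF GMP a b W'] by blast
  consider "Z \<notin> W" | "Z \<in> W" "Xi \<in> W" | "Z \<in> W" "Xi \<notin> W" by blast
  then show ?thesis
  proof cases
    case 1
    then show ?thesis using indep unfolding W'_def by simp
  next
    case 2
    then have "W = insert Z W'" "Xi \<in> W'" using Xi_ne_Z unfolding W'_def by auto
    then show ?thesis using cond_indep_insert_determined[OF fd _ indep] by simp
  next
    case 3
    then have W: "W = insert Z W'" and "Xi \<notin> W'" unfolding W'_def by auto
    have indep_parent: "cond_indep P X a b (insert Xi W')"
      unfolding W'_def using GMP sep a b \<open>Z \<in> W\<close> \<open>W \<subseteq> V\<close> by (rule cond_indep_insert_parent)
    have "msep D\<^sub>U B\<^sub>U a Xi W' \<or> msep D\<^sub>U B\<^sub>U b Xi W'"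
      unfolding W'_def using sep a b 3 by (rule msep_restrict_either_parent)
    then show ?thesis
    proof
      assume "msep D\<^sub>U B\<^sub>U a Xi W'"
      then have "cond_indep P X a Xi W'" using GMPD[OF GMP a Xi_in_U W'] by blast
      then show ?thesis unfolding W using cond_indep_contraction_FD[OF fd _ indep_parent] by blast
    next
      assume "msep D\<^sub>U B\<^sub>U b Xi W'"
      then have "cond_indep P X b Xi W'" using GMPD[OF GMP b Xi_in_U W'] by blast
      then have "cond_indep P X b a (insert Z W')"
        using cond_indep_contraction_FD[OF fd _ cond_indep_sym[OF indep_parent]] by blast
      then show ?thesis unfolding W by (rule cond_indep_sym)
    qed
  qed
qed

lemma GMP_of_restrict:
  assumes GMP: "GMP P X U D\<^sub>U B\<^sub>U" and fd: "FD P X Xi Z"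
  shows "GMP P X V D B"
  unfolding GMP_def
proof (intro ballI allI impI)
  fix a b W assume "a \<in> V" "b \<in> V" "W \<subseteq> V" and sep: "msep D B a b W"
  have "a \<noteq> b" using sep msep_irrefl by metis
  then consider "a \<in> U" "b = Z" | "a = Z" "b \<in> U" | "a \<in> U" "b \<in> U"
    using \<open>a \<in> V\<close> \<open>b \<in> V\<close> by blast
  then show "cond_indep P X a b W"
  proof cases
    case 1
    then show ?thesis using cond_indep_of_msep_to_child[OF GMP fd] sep \<open>W \<subseteq> V\<close> by blast
  next
    case 2
    then have "msep D B b Z W" using msep_sym[OF sep] by simp
    then have "cond_indep P X b Z W"
      using cond_indep_of_msep_to_child[OF GMP fd] 2 \<open>W \<subseteq> V\<close> by blast
    then have "cond_indep P X b a W" using 2 by simp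
    then show ?thesis by (rule cond_indep_sym)
  next
    case 3
    then show ?thesis using cond_indep_of_msep_in_U[OF GMP fd sep] \<open>W \<subseteq> V\<close> by blast
  qed
qed

end

section \<open>Harmonious skeletons\<close>

lemma is_dmg_insert_pendant_edge:
  assumes "is_dmg (V - {Z}) D B" and "Xi \<in> V - {Z}" and "Z \<in> V"
  shows "is_dmg V (insert (Xi, Z) D) B"
  using assms unfolding is_dmg_def by blast

lemma compatible_skel_extend:
  assumes "compatible_skel P X (V - {Z}) S" and "Xi \<in> V - {Z}" and "Z \<in> V" and "FD P X Xi Z"
  shows "compatible_skel P X V (S \<union> {{Xi, Z}})"
proof -
  obtain D B where MAG: "is_MAG (V - {Z}) D B" and skel: "mag_skeleton D B = S"
    and GMP: "GMP P X (V - {Z}) D B"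
    using assms(1) unfolding compatible_skel_def by blast
  have dmg: "is_dmg (V - {Z}) D B" using MAG by (rule is_MAG_dmg)
  then have in_U: "D \<subseteq> (V - {Z}) \<times> (V - {Z})" "B \<subseteq> (V - {Z}) \<times> (V - {Z})"
    unfolding is_dmg_def by blast+
  interpret pendant_child V "insert (Xi, Z) D" B Z Xi
  proof
    show "is_dmg V (insert (Xi, Z) D) B" using dmg assms(2,3) by (rule is_dmg_insert_pendant_edge)
    show "adj (insert (Xi, Z) D) B x Z \<Longrightarrow> x = Xi" for x using in_U unfolding adj_def by blast
  qed (rule assms(3), simp)
  have restrict: "insert (Xi, Z) D \<inter> ((V - {Z}) \<times> (V - {Z})) = D" "B \<inter> ((V - {Z}) \<times> (V - {Z})) = B"
    using in_U by auto
  have "is_MAG V (insert (Xi, Z) D) B" using is_MAG_of_restrict MAG restrict by simp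
  moreover have "GMP P X V (insert (Xi, Z) D) B" using GMP_of_restrict GMP assms(4) restrict by simp
  moreover have "mag_skeleton (insert (Xi, Z) D) B = S \<union> {{Xi, Z}}"
    using skel unfolding mag_skeleton_def by blast
  ultimately show ?thesis unfolding compatible_skel_def by blast
qed

lemma compatible_skel_restrict:
  assumes "compatible_skel P X V E" and "Z \<in> V" and "\<And>e. e \<in> E \<Longrightarrow> Z \<in> e \<Longrightarrow> e = {Xi, Z}"
  shows "compatible_skel P X (V - {Z}) (E - {{Xi, Z}})"
proof -
  obtain D B where MAG: "is_MAG V D B" and skel: "mag_skeleton D B = E" and GMP: "GMP P X V D B"
    using assms(1) unfolding compatible_skel_def by blast
  interpret pendant_vertex V D B Z Xi
  proof
    show "is_dmg V D B" using MAG by (rule is_MAG_dmg)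
    show "x = Xi" if "adj D B x Z" for x
    proof -
      have "{x, Z} \<in> E" using that skel unfolding adj_def mag_skeleton_def by (auto simp: insert_commute)
      then have "{x, Z} = {Xi, Z}" using assms(3) by blast
      then show ?thesis by (metis doubleton_eq_iff)
    qed
  qed (rule assms(2))
  show ?thesis
    unfolding compatible_skel_def using is_MAG_restrict[OF MAG] GMP_restrict[OF GMP] mag_skeleton_restrict skel
    by blast
qed

lemma compatible_skel_child_not_isolated:
  assumes "compatible_skel P X V E" and "Xi \<in> V - {Z}" and "Z \<in> V" and "FD P X Xi Z"
    and "\<exists>y y'. y \<noteq> y' \<and> measure_pmf.prob P {\<omega>. X Z \<omega> = y} > 0 \<and> measure_pmf.prob P {\<omega>. X Z \<omega> = y'} > 0"
  shows "\<exists>e\<in>E. Z \<in> e"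
proof (rule ccontr)
  assume isolated: "\<not> (\<exists>e\<in>E. Z \<in> e)"
  obtain D B where skel: "mag_skeleton D B = E" and GMP: "GMP P X V D B"
    using assms(1) unfolding compatible_skel_def by blast
  have "\<not> adj D B x Z" for x
    using isolated skel unfolding adj_def mag_skeleton_def by blast
  moreover have "Xi \<noteq> Z" using assms(2) by blast
  ultimately have "msep D B Xi Z {}" by (rule msep_isolated)
  then have "cond_indep P X Xi Z {}" using GMPD[OF GMP _ \<open>Z \<in> V\<close>] assms(2) by blast
  then show False using not_cond_indep_empty_FD[OF \<open>FD P X Xi Z\<close>] assms(5) by blast
qed

theorem theorem3p4:
  fixes P :: "'w pmf" and X :: "'v \<Rightarrow> 'w \<Rightarrow> 'a" and V :: "'v set"
    and Z Xi :: 'v and S1 :: "'v set set"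
  assumes "finite V"
    and "\<forall>v\<in>V. \<exists>x y. x \<noteq> y \<and> measure_pmf.prob P {\<omega>. X v \<omega> = x} > 0
                          \<and> measure_pmf.prob P {\<omega>. X v \<omega> = y} > 0"
    and "acyclic (fd_edges P X V)"
    and "Z \<in> V"
    and "\<forall>w\<in>V. (Z, w) \<notin> fd_edges P X V"
    and "(Xi, Z) \<in> fd_edges P X V"
    and "harmonious P X (V - {Z}) S1"
  shows "harmonious P X V (S1 \<union> {{Xi, Z}})"
proof -
  have Xi: "Xi \<in> V - {Z}" and fd: "FD P X Xi Z" using assms(6) unfolding fd_edges_def by auto
  have ugraph: "is_ugraph (V - {Z}) S1" and compatible: "compatible_skel P X (V - {Z}) S1"
    and minimal: "\<not> (\<exists>E'. E' \<subset> S1 \<and> compatible_skel P X (V - {Z}) E')"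
    using assms(7) unfolding harmonious_def by blast+
  have S1_avoids_Z: "Z \<notin> e" if "e \<in> S1" for e
    using bspec[OF ugraph[unfolded is_ugraph_def] that] by auto
  have "\<not> compatible_skel P X V E'" if "E' \<subset> S1 \<union> {{Xi, Z}}" for E'
  proof
    assume E': "compatible_skel P X V E'"
    have "compatible_skel P X (V - {Z}) (E' - {{Xi, Z}})"
      using E' assms(4) by (rule compatible_skel_restrict) (use that S1_avoids_Z in blast)
    moreover have "E' - {{Xi, Z}} \<subseteq> S1" using that by blast
    ultimately have "E' - {{Xi, Z}} = S1" using minimal by (metis psubsetI)
    then have "{Xi, Z} \<notin> E'" using that by blast
    then have "\<not> (\<exists>e\<in>E'. Z \<in> e)" using that S1_avoids_Z by blast
    then show False
      using compatible_skel_child_not_isolated[OF E' Xi assms(4) fd bspec[OF assms(2,4)]] by blast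
  qed
  moreover have "is_ugraph V (S1 \<union> {{Xi, Z}})"
    using ugraph Xi assms(4) unfolding is_ugraph_def by blast
  ultimately show ?thesis
    using compatible_skel_extend[OF compatible Xi assms(4) fd] unfolding harmonious_def by blast
qed

end
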